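(* Let $M_\sharp\in\mathbb{R}^{d_1\times d_2}$ have rank $r$ with compact SVD $M_\sharp=U\Lambda V^\top$, and set $X_\sharp=U\sqrt\Lambda$, $Y_\sharp=\sqrt\Lambda V^\top$. Let $\mathcal{A}\colon\mathbb{R}^{d_1\times d_2}\to\mathbb{R}^m$ be linear and $b\in\mathbb{R}^m$, and suppose there exist $\mathcal{I}\subset\{1,\dots,m\}$ and $\kappa_3>0$ with (i) $b_i=\mathcal{A}(M_\sharp)_i$ for all $i\notin\mathcal{I}$, and (ii) $\kappa_3\|W\|_F\le\frac1m\|\mathcal{A}_{\mathcal{I}^c}(W)\|_1-\frac1m\|\mathcal{A}_{\mathcal{I}}(W)\|_1$ for every $W$ of rank at most $2r$. Let $f(X,Y)=\frac1m\|\mathcal{A}(XY)-b\|_1$. Fix $\nu>0$. Then for all $X\in\mathbb{R}^{d_1\times r}$, $Y\in\mathbb{R}^{r\times d_2}$ with $$\max\{\|X-X_\sharp\|_F,\|Y-Y_\sharp\|_F\}\le\nu\sqrt{\sigma_r(M_\sharp)},\qquad\mathrm{dist}\big((X,Y),\mathcal{D}^*(M_\sharp)\big)\le\frac{\sqrt{\sigma_r(M_\sharp)}}{1+2(1+\sqrt2)\nu},$$ we have $$f(X,Y)-f(X_\sharp,Y_\sharp)\ge\frac{\kappa_3\sqrt{\sigma_r(M_\sharp)}}{2+4(1+\sqrt2)\nu}\,\mathrm{dist}\big((X,Y),\mathcal{D}^*(M_\sharp)\big).$$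
   Context: For $\mathcal{J}\subset\{1,\dots,m\}$, $\mathcal{A}_{\mathcal{J}}(W)=(\mathcal{A}(W)_i)_{i\in\mathcal{J}}$. $\mathcal{D}^*(M_\sharp)=\{(X_\sharp A,A^{-1}Y_\sharp):A\in GL(r)\}$ and $\mathrm{dist}((X,Y),\mathcal{D}^*(M_\sharp))=\inf_{A\in GL(r)}\sqrt{\|X-X_\sharp A\|_F^2+\|Y-A^{-1}Y_\sharp\|_F^2}$. $\sigma_r$ is the $r$-th largest singular value. *)

theory Defs
  imports "HOL-Analysis.Analysis"
begin

text \<open>Matrices are HOL-Analysis matrices real^'c^'r (rows 'r, columns 'c).
  The norm on such matrices is the Frobenius norm.\<close>

text \<open>k-th largest singular value (Courant--Fischer min-max definition).\<close>
definition sing_val :: "nat \<Rightarrow> real^'c^'r \<Rightarrow> real" where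
  "sing_val k M = (SUP S\<in>{S :: (real^'c) set. subspace S \<and> dim S = k}.
       (INF x\<in>{x\<in>S. norm x = 1}. norm (M *v x)))"

definition diag_mat :: "('n \<Rightarrow> real) \<Rightarrow> real^'n^'n" where
  "diag_mat d = (\<chi> i j. if i = j then d i else 0)"

definition l1_sub :: "'m set \<Rightarrow> real^'m \<Rightarrow> real" where
  "l1_sub J v = (\<Sum>i\<in>J. \<bar>v $ i\<bar>)"

definition dist_Dstar ::
  "real^'r^'d1 \<Rightarrow> real^'d2^'r \<Rightarrow> real^'r^'d1 \<Rightarrow> real^'d2^'r \<Rightarrow> real" where
  "dist_Dstar Xs Ys X Y = (INF A\<in>{A :: real^'r^'r. invertible A}.
      sqrt ((norm (X - Xs ** A))\<^sup>2 + (norm (Y - matrix_inv A ** Ys))\<^sup>2))"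

end

theory Submission
  imports Defs
begin

text \<open>
  Write \<open>E = X Y - M\<close>. It has rank at most \<open>2r\<close>, so sharpness of \<open>\<A>\<close>, together with
  \<open>b\<close> agreeing with \<open>\<A> M\<close> off \<open>I\<close>, gives \<open>f X Y - f Xs Ys \<ge> \<kappa>3 \<parallel>E\<parallel>\<close>.

  To bound \<open>\<parallel>E\<parallel>\<close> from below by the distance to the orbit, suppose the \<open>r \<times> r\<close> matrices
  \<open>U\<^sup>T X\<close> and \<open>V\<^sup>T Y\<^sup>T\<close> have least singular value at least \<open>a\<close>. Taking the orbit point with
  \<open>A = S\<^sup>-\<^sup>1 U\<^sup>T X\<close> (where \<open>S = \<surd>\<Lambda>\<close>) and splitting \<open>E\<close> into blocks along \<open>U, U\<^sup>\<bottom>\<close> and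
  \<open>V, V\<^sup>\<bottom>\<close> gives \<open>a \<cdot> dist \<le> \<parallel>E\<parallel>\<close>.

  The least singular values of \<open>U\<^sup>T X = S B + U\<^sup>T (X - U S B)\<close> are bounded by perturbation:
  with \<open>B = 1\<close> (Weyl's inequality), which suffices for \<open>\<nu> \<le> 1/2\<close>, and otherwise with
  \<open>(U S B, B\<^sup>-\<^sup>1 S V\<^sup>T)\<close> a nearly optimal orbit point, where both hypotheses together
  force \<open>B\<close> and \<open>B\<^sup>-\<^sup>1\<close> to be close to the identity.
\<close>

section \<open>Frobenius norm and matrices with orthonormal columns\<close>

lemma norm_vec_power2: "(norm (x::'a::real_normed_vector^'n))\<^sup>2 = (\<Sum>i\<in>UNIV. (norm (x$i))\<^sup>2)"
  unfolding norm_vec_def L2_set_def by (simp add: sum_nonneg)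

lemma scaled_norm_le_componentwise:
  fixes x :: "'a::real_normed_vector^'n" and y :: "'b::real_normed_vector^'n"
  assumes "\<And>i. a * norm (x$i) \<le> norm (y$i)" and "0 \<le> a"
  shows "a * norm x \<le> norm y"
  using norm_le_componentwise_cart[of "a *\<^sub>R x" y] assms by simp

lemma norm_le_scaled_componentwise:
  fixes x :: "'a::real_normed_vector^'n" and y :: "'b::real_normed_vector^'n"
  assumes "\<And>i. norm (y$i) \<le> a * norm (x$i)" and "0 \<le> a"
  shows "norm y \<le> a * norm x"
  using norm_le_componentwise_cart[of y "a *\<^sub>R x"] assms by simp

lemma norm_transpose: "norm (transpose (A::real^'n^'m)) = norm A"
proof -
  have "(norm (transpose A))\<^sup>2 = (\<Sum>j\<in>UNIV. \<Sum>i\<in>UNIV. (A$i$j)\<^sup>2)"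
    by (simp add: norm_vec_power2 transpose_def)
  also have "\<dots> = (norm A)\<^sup>2"
    by (subst sum.swap) (simp add: norm_vec_power2)
  finally show ?thesis by (simp add: power2_eq_iff_nonneg)
qed

lemma transpose_diff: "transpose (A - B) = transpose A - transpose (B::'a::ab_group_add^'n^'m)"
  by (simp add: vec_eq_iff transpose_def)

lemma matrix_diff_ldistrib: "(A::'a::ring_1^'n^'m) ** (B - C) = A ** B - A ** C"
  by (simp add: vec_eq_iff matrix_matrix_mult_def sum_subtractf algebra_simps)

lemma matrix_diff_rdistrib: "((B::'a::ring_1^'n^'m) - C) ** A = B ** A - C ** A"
  by (simp add: vec_eq_iff matrix_matrix_mult_def sum_subtractf algebra_simps)

lemma matrix_matrix_mult_row: "((A::real^'n^'m) ** B) $ i = transpose B *v (A $ i)"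
  by (auto simp: vec_eq_iff matrix_matrix_mult_def matrix_vector_mult_def transpose_def
      mult.commute intro!: sum.cong)

lemma norm_matrix_vector_mult_le: "norm ((A::real^'n^'m) *v x) \<le> norm A * norm x"
proof -
  have "\<And>i. \<bar>A $ i \<bullet> x\<bar> \<le> norm x * norm (A $ i)"
    by (metis Cauchy_Schwarz_ineq2 mult.commute)
  then have "norm (A *v x) \<le> norm x * norm A"
    by (intro norm_le_scaled_componentwise) (simp_all add: matrix_vector_mul_component)
  then show ?thesis by (simp add: mult.commute)
qed

lemma norm_orthonormal_mult_vec:
  fixes G :: "real^'k^'n"
  assumes "transpose G ** G = mat 1"
  shows "norm (G *v v) = norm v"
proof -
  have "(G *v v) \<bullet> (G *v v) = v \<bullet> (transpose G *v (G *v v))"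
    by (metis dot_lmul_matrix vector_transpose_matrix)
  also have "\<dots> = v \<bullet> v" using assms by (simp add: matrix_vector_mul_assoc)
  finally show ?thesis by (simp add: norm_eq_sqrt_inner)
qed

lemma pythagoras_orthonormal_vec:
  fixes G :: "real^'k^'n"
  assumes G: "transpose G ** G = mat 1"
  shows "(norm x)\<^sup>2 = (norm (transpose G *v x))\<^sup>2 + (norm (x - G *v (transpose G *v x)))\<^sup>2"
proof -
  define y where "y = transpose G *v x"
  define p where "p = G *v y"
  have "p \<bullet> x = (y v* transpose G) \<bullet> x"
    by (simp only: p_def vector_transpose_matrix)
  also have "\<dots> = y \<bullet> (transpose G *v x)" by (rule dot_lmul_matrix)
  finally have px: "p \<bullet> x = y \<bullet> y" by (simp only: y_def)
  have pp: "p \<bullet> p = y \<bullet> y"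
    using norm_orthonormal_mult_vec[OF G, of y] by (simp add: p_def dot_square_norm)
  have "(x - p) \<bullet> (x - p) = x \<bullet> x - x \<bullet> p - (p \<bullet> x - p \<bullet> p)"
    by (simp only: inner_diff_left inner_diff_right)
  then have "x \<bullet> x = p \<bullet> p + (x - p) \<bullet> (x - p)"
    using px pp inner_commute[of x p] by linarith
  then show ?thesis
    by (simp only: pp power2_norm_eq_inner flip: p_def y_def)
qed

lemma norm_transpose_orthonormal_mult_vec_le:
  fixes G :: "real^'k^'n"
  assumes "transpose G ** G = mat 1"
  shows "norm (transpose G *v x) \<le> norm x"
proof (rule power2_le_imp_le)
  show "(norm (transpose G *v x))\<^sup>2 \<le> (norm x)\<^sup>2"
    using pythagoras_orthonormal_vec[OF assms, of x] by simp
qed simp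

lemma pythagoras_orthonormal_right:
  fixes G :: "real^'k^'n" and W :: "real^'n^'m"
  assumes G: "transpose G ** G = mat 1"
  shows "(norm W)\<^sup>2 = (norm (W ** G))\<^sup>2 + (norm (W ** (mat 1 - G ** transpose G)))\<^sup>2"
proof -
  have row: "(W ** (mat 1 - G ** transpose G)) $ i = W$i - G *v (transpose G *v W$i)" for i
    by (simp only: matrix_matrix_mult_row transpose_diff transpose_mat matrix_transpose_mul
        transpose_transpose matrix_vector_mult_diff_rdistrib matrix_vector_mul_assoc
        matrix_vector_mul_lid)
  have "(norm W)\<^sup>2 = (\<Sum>i\<in>UNIV.
      (norm ((W ** G)$i))\<^sup>2 + (norm ((W ** (mat 1 - G ** transpose G))$i))\<^sup>2)"
    unfolding norm_vec_power2[of W] row matrix_matrix_mult_row[of W G]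
    by (rule sum.cong[OF refl]) (rule pythagoras_orthonormal_vec[OF G])
  then show ?thesis by (simp only: sum.distrib norm_vec_power2)
qed

lemma pythagoras_orthonormal_left:
  fixes G :: "real^'k^'n" and W :: "real^'m^'n"
  assumes G: "transpose G ** G = mat 1"
  shows "(norm W)\<^sup>2 = (norm (transpose G ** W))\<^sup>2 + (norm ((mat 1 - G ** transpose G) ** W))\<^sup>2"
proof -
  have "transpose W ** G = transpose (transpose G ** W)"
    and "transpose W ** (mat 1 - G ** transpose G) = transpose ((mat 1 - G ** transpose G) ** W)"
    by (simp_all only: matrix_transpose_mul transpose_transpose transpose_diff transpose_mat)
  then show ?thesis
    using pythagoras_orthonormal_right[OF G, of "transpose W"] by (simp only: norm_transpose)
qed

lemma norm_orthonormal_mult: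
  fixes G :: "real^'k^'n" and W :: "real^'m^'k"
  assumes G: "transpose G ** G = mat 1"
  shows "norm (G ** W) = norm W"
proof -
  have GGW: "transpose G ** (G ** W) = W"
    by (simp only: matrix_mul_assoc G matrix_mul_lid)
  have "(mat 1 - G ** transpose G) ** (G ** W) = G ** W - G ** (transpose G ** (G ** W))"
    by (simp only: matrix_diff_rdistrib matrix_mul_lid matrix_mul_assoc)
  then have "(mat 1 - G ** transpose G) ** (G ** W) = 0"
    by (simp only: GGW diff_self)
  then have "(norm (G ** W))\<^sup>2 = (norm W)\<^sup>2"
    using pythagoras_orthonormal_left[OF G, of "G ** W"] by (simp only: GGW norm_zero) simp
  then show ?thesis by (simp add: power2_eq_iff_nonneg)
qed

lemma diag_mat_mult_vec: "diag_mat d *v w = (\<chi> i. d i * w$i)"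
  by (simp add: vec_eq_iff diag_mat_def matrix_vector_mult_def if_distrib if_distribR cong: if_cong)

lemma diag_mat_mult: "diag_mat a ** diag_mat b = diag_mat (\<lambda>i. a i * b i)"
proof -
  have "(\<Sum>j\<in>UNIV. (if i = j then a i else 0) * (if j = k then b j else 0))
      = (if i = k then a i * b i else 0)" for i k
    by (simp add: if_distrib[of "\<lambda>x. x * _"] sum.delta cong: if_cong)
  then show ?thesis by (simp add: vec_eq_iff diag_mat_def matrix_matrix_mult_def)
qed

lemma transpose_diag_mat: "transpose (diag_mat d) = diag_mat d"
  by (simp add: vec_eq_iff diag_mat_def transpose_def)

lemma invertible_diag_mat:
  assumes "\<And>i. d i \<noteq> 0"
  shows "invertible (diag_mat d)"
proof -
  have "diag_mat d ** diag_mat (\<lambda>i. 1 / d i) = mat 1"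
    using assms by (simp add: diag_mat_mult) (simp add: diag_mat_def mat_def)
  then show ?thesis by (auto simp: invertible_right_inverse)
qed

lemma matrix_inv_inverse:
  fixes A :: "real^'n^'n"
  assumes "invertible A"
  shows "A ** matrix_inv A = mat 1" and "matrix_inv A ** A = mat 1"
  using someI_ex[OF assms[unfolded invertible_def]] by (simp_all add: matrix_inv_def)

lemma matrix_inv_unique:
  fixes A B :: "real^'n^'n"
  assumes AB: "A ** B = mat 1" and BA: "B ** A = mat 1"
  shows "matrix_inv A = B"
proof -
  have "invertible A" using AB BA by (auto simp: invertible_def)
  then have "B ** (A ** matrix_inv A) = B" by (simp add: matrix_inv_inverse)
  then show ?thesis by (simp add: matrix_mul_assoc BA)
qed

section \<open>Least singular values of the factors\<close>

(* For square K and a \<ge> 0 this says that the least singular value of K is at least a. *)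
definition stretch_ge :: "real^'n^'m \<Rightarrow> real \<Rightarrow> bool" where
  "stretch_ge K a \<longleftrightarrow> (\<forall>w. a * norm w \<le> norm (K *v w))"

lemma stretch_ge_mono:
  assumes "stretch_ge K a" and "b \<le> a"
  shows "stretch_ge K b"
  using assms unfolding stretch_ge_def by (meson mult_right_mono norm_ge_zero order_trans)

lemma stretch_ge_nonpos: "a \<le> 0 \<Longrightarrow> stretch_ge K a"
  unfolding stretch_ge_def by (meson mult_nonpos_nonneg norm_ge_zero order_trans)

lemma stretch_ge_diag_mat:
  assumes "\<And>i. t \<le> d i" and "0 \<le> t"
  shows "stretch_ge (diag_mat d) t"
  unfolding stretch_ge_def
proof (intro allI scaled_norm_le_componentwise)
  fix w i
  show "t * norm (w$i) \<le> norm ((diag_mat d *v w)$i)"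
    using order_trans[OF assms(2) assms(1)[of i]]
      mult_right_mono[OF assms(1)[of i] abs_ge_zero[of "w$i"]]
    by (simp add: diag_mat_mult_vec abs_mult)
qed (rule assms)

lemma norm_mult_ge_right:
  fixes Z :: "real^'k^'n" and W :: "real^'n^'m"
  assumes "stretch_ge (transpose Z) a" and "0 \<le> a"
  shows "a * norm W \<le> norm (W ** Z)"
  using assms unfolding stretch_ge_def
  by (intro scaled_norm_le_componentwise) (simp_all add: matrix_matrix_mult_row)

lemma norm_mult_ge_left:
  fixes Z :: "real^'k^'n" and W :: "real^'m^'k"
  assumes "stretch_ge Z a" and "0 \<le> a"
  shows "a * norm W \<le> norm (Z ** W)"
  using norm_mult_ge_right[where a = a and Z = "transpose Z" and W = "transpose W"] assms
  by (simp add: matrix_transpose_mul[symmetric] norm_transpose)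

lemma norm_orthonormal_diag_mult_ge:
  fixes G :: "real^'k^'n" and W :: "real^'m^'k"
  assumes G: "transpose G ** G = mat 1" and s: "\<And>i. t \<le> s i" and t: "0 \<le> t"
  shows "t * norm W \<le> norm (G ** diag_mat s ** W)"
  using norm_mult_ge_left[OF stretch_ge_diag_mat[where d = s, OF s t] t, of W]
  by (simp add: norm_orthonormal_mult[OF G] flip: matrix_mul_assoc)

lemma scaled_norm_le_left_inverse:
  fixes B Bi :: "real^'k^'k"
  assumes Bi: "Bi ** B = mat 1" and e: "t * norm (Bi - mat 1) \<le> e" and t: "0 \<le> t"
  shows "t * norm w \<le> (t + e) * norm (B *v w)"
proof -
  have "w = B *v w + (Bi - mat 1) *v (B *v w)"
    by (simp add: matrix_vector_mult_diff_rdistrib matrix_vector_mul_assoc matrix_diff_rdistrib Bi)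
  then have "norm w \<le> norm (B *v w) + norm (Bi - mat 1) * norm (B *v w)"
    by (metis norm_matrix_vector_mult_le norm_triangle_le add_left_mono)
  then have "t * norm w \<le> t * (norm (B *v w) + norm (Bi - mat 1) * norm (B *v w))"
    using t by (simp add: mult_left_mono)
  also have "\<dots> = t * norm (B *v w) + (t * norm (Bi - mat 1)) * norm (B *v w)"
    by (simp add: algebra_simps)
  also have "\<dots> \<le> t * norm (B *v w) + e * norm (B *v w)"
    using e by (simp add: mult_right_mono)
  also have "\<dots> = (t + e) * norm (B *v w)"
    by (simp add: algebra_simps)
  finally show ?thesis .
qed

(* G\<^sup>T K = diag s B + G\<^sup>T (K - G diag s B), and since B\<^sup>-\<^sup>1 is within e/t of the identity,
   diag s B stretches by at least t\<^sup>2/(t + e). *)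
lemma stretch_ge_perturbed_factor:
  fixes G K :: "real^'k^'n" and B Bi :: "real^'k^'k"
  assumes G: "transpose G ** G = mat 1" and s: "\<And>i. t \<le> s i" and t: "0 < t"
    and Bi: "Bi ** B = mat 1"
    and K: "norm (K - G ** diag_mat s ** B) \<le> \<delta>" and e: "t * norm (Bi - mat 1) \<le> e"
  shows "stretch_ge (transpose G ** K) (t * t / (t + e) - \<delta>)"
  unfolding stretch_ge_def
proof
  fix w
  define R where "R = K - G ** diag_mat s ** B"
  have "transpose G ** K = diag_mat s ** B + transpose G ** R"
    by (simp add: R_def matrix_diff_ldistrib matrix_mul_assoc G)
  then have "(transpose G ** K) *v w = diag_mat s *v (B *v w) + transpose G *v (R *v w)"
    by (simp only: matrix_vector_mult_add_rdistrib matrix_vector_mul_assoc)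
  then have split: "norm (diag_mat s *v (B *v w)) - norm (transpose G *v (R *v w))
      \<le> norm ((transpose G ** K) *v w)"
    by (metis norm_diff_ineq)
  have diag: "t * norm (B *v w) \<le> norm (diag_mat s *v (B *v w))"
    using stretch_ge_diag_mat[where d = s, OF s] t by (simp add: stretch_ge_def)
  have "norm (transpose G *v (R *v w)) \<le> norm R * norm w"
    using norm_transpose_orthonormal_mult_vec_le[OF G] norm_matrix_vector_mult_le order_trans by blast
  also have "\<dots> \<le> \<delta> * norm w" using K by (simp add: R_def mult_right_mono)
  finally have residual: "norm (transpose G *v (R *v w)) \<le> \<delta> * norm w" .
  have "t * norm w \<le> (t + e) * norm (B *v w)"
    using scaled_norm_le_left_inverse[OF Bi e] t by simp
  moreover have "0 < t + e"
    using t e by (smt (verit) mult_nonneg_nonneg norm_ge_zero)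
  ultimately have "t * norm w / (t + e) \<le> norm (B *v w)"
    by (simp add: pos_divide_le_eq mult.commute)
  then have "t * t / (t + e) * norm w \<le> t * norm (B *v w)"
    using t mult_left_mono[of "t * norm w / (t + e)" "norm (B *v w)" t] by simp
  with split diag residual
  show "(t * t / (t + e) - \<delta>) * norm w \<le> norm ((transpose G ** K) *v w)"
    by (simp add: left_diff_distrib)
qed

lemma norm_transpose_factor_residual:
  "norm (transpose Y - V ** diag_mat s ** transpose C) = norm (Y - C ** (diag_mat s ** transpose V))"
proof -
  have "transpose (Y - C ** (diag_mat s ** transpose V)) = transpose Y - V ** diag_mat s ** transpose C"
    by (simp add: transpose_diff matrix_transpose_mul transpose_diag_mat matrix_mul_assoc)
  then show ?thesis by (metis norm_transpose)
qed

lemma scaled_norm_diff_mat1_le: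
  fixes G K :: "real^'k^'n" and B :: "real^'k^'k"
  assumes G: "transpose G ** G = mat 1" and s: "\<And>i. t \<le> s i" and t: "0 \<le> t"
  shows "t * norm (B - mat 1) \<le> norm (K - G ** diag_mat s ** B) + norm (K - G ** diag_mat s)"
proof -
  have "t * norm (B - mat 1) \<le> norm (G ** diag_mat s ** (B - mat 1))"
    by (rule norm_orthonormal_diag_mult_ge[OF G s t])
  also have "G ** diag_mat s ** (B - mat 1) = (K - G ** diag_mat s) - (K - G ** diag_mat s ** B)"
    by (simp add: matrix_diff_ldistrib)
  also have "norm \<dots> \<le> norm (K - G ** diag_mat s) + norm (K - G ** diag_mat s ** B)"
    by (rule norm_triangle_ineq4)
  finally show ?thesis by simp
qed

(* Weyl's inequality: the case B = 1. *)
lemma stretch_ge_factors_close: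
  fixes U :: "real^'r^'d1" and V :: "real^'r^'d2" and X :: "real^'r^'d1" and Y :: "real^'d2^'r"
  assumes U: "transpose U ** U = mat 1" and V: "transpose V ** V = mat 1"
    and s: "\<And>i. t \<le> s i" and t: "0 < t"
    and X: "norm (X - U ** diag_mat s) \<le> \<epsilon>"
    and Y: "norm (Y - diag_mat s ** transpose V) \<le> \<epsilon>"
  shows "stretch_ge (transpose U ** X) (t - \<epsilon>)"
    and "stretch_ge (transpose V ** transpose Y) (t - \<epsilon>)"
proof -
  have Y': "norm (transpose Y - V ** diag_mat s ** mat 1) \<le> \<epsilon>"
    using Y norm_transpose_factor_residual[of Y V s "mat 1"] by simp
  show "stretch_ge (transpose U ** X) (t - \<epsilon>)"
    using stretch_ge_perturbed_factor[OF U _ t, where s = s and Bi = "mat 1" and B = "mat 1" and e = 0]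
      s X t
    by simp
  show "stretch_ge (transpose V ** transpose Y) (t - \<epsilon>)"
    using stretch_ge_perturbed_factor[OF V _ t _ Y', where Bi = "mat 1" and e = 0] s t by simp
qed

(* B is close to the identity because U diag s B and U diag s are both close to X;
   likewise B\<^sup>-\<^sup>1 via Y. *)
lemma stretch_ge_factors_near_orbit:
  fixes U :: "real^'r^'d1" and V :: "real^'r^'d2" and X :: "real^'r^'d1" and Y :: "real^'d2^'r"
  assumes U: "transpose U ** U = mat 1" and V: "transpose V ** V = mat 1"
    and s: "\<And>i. t \<le> s i" and t: "0 < t" and B: "invertible B"
    and X: "norm (X - U ** diag_mat s) \<le> \<epsilon>"
    and Y: "norm (Y - diag_mat s ** transpose V) \<le> \<epsilon>"
    and XB: "norm (X - U ** diag_mat s ** B) \<le> \<delta>"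
    and YB: "norm (Y - matrix_inv B ** (diag_mat s ** transpose V)) \<le> \<delta>"
  shows "stretch_ge (transpose U ** X) (t * t / (t + (\<delta> + \<epsilon>)) - \<delta>)"
    and "stretch_ge (transpose V ** transpose Y) (t * t / (t + (\<delta> + \<epsilon>)) - \<delta>)"
proof -
  define Bi where "Bi = matrix_inv B"
  have Y': "norm (transpose Y - V ** diag_mat s) \<le> \<epsilon>"
    using Y norm_transpose_factor_residual[of Y V s "mat 1"] by simp
  have YB': "norm (transpose Y - V ** diag_mat s ** transpose Bi) \<le> \<delta>"
    using YB norm_transpose_factor_residual[of Y V s Bi] by (simp add: Bi_def)
  have "t * norm (transpose Bi - mat 1) \<le> \<delta> + \<epsilon>"
    using scaled_norm_diff_mat1_le[where s = s and B = "transpose Bi" and K = "transpose Y", OF V s] YB' Y' t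
    by linarith
  then have eX: "t * norm (Bi - mat 1) \<le> \<delta> + \<epsilon>"
    by (metis norm_transpose transpose_diff transpose_mat)
  have "t * norm (B - mat 1) \<le> \<delta> + \<epsilon>"
    using scaled_norm_diff_mat1_le[where s = s and B = B and K = X, OF U s] XB X t by linarith
  then have eY: "t * norm (transpose B - mat 1) \<le> \<delta> + \<epsilon>"
    by (metis norm_transpose transpose_diff transpose_mat)
  have "transpose B ** transpose Bi = mat 1"
    using matrix_inv_inverse(2)[OF B] by (simp add: Bi_def flip: matrix_transpose_mul)
  then show "stretch_ge (transpose V ** transpose Y) (t * t / (t + (\<delta> + \<epsilon>)) - \<delta>)"
    by (rule stretch_ge_perturbed_factor[OF V s t _ YB' eY])
  show "stretch_ge (transpose U ** X) (t * t / (t + (\<delta> + \<epsilon>)) - \<delta>)"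
    using matrix_inv_inverse(2)[OF B]
    by (intro stretch_ge_perturbed_factor[OF U _ t _ XB eX]) (simp_all add: Bi_def s)
qed

section \<open>Distance to the orbit\<close>

lemma dist_Dstar_nonneg: "0 \<le> dist_Dstar Xs Ys X Y"
  unfolding dist_Dstar_def
  by (rule cINF_greatest) (auto simp: invertible_def intro!: exI[of _ "mat 1"])

lemma dist_Dstar_le:
  assumes "invertible A"
  shows "dist_Dstar Xs Ys X Y \<le> sqrt ((norm (X - Xs ** A))\<^sup>2 + (norm (Y - matrix_inv A ** Ys))\<^sup>2)"
  unfolding dist_Dstar_def
  by (rule cINF_lower) (auto intro!: bdd_belowI2[where m=0] simp: assms)

lemma dist_Dstar_less_imp:
  assumes "dist_Dstar Xs Ys X Y < \<delta>"
  obtains A where "invertible A" and "norm (X - Xs ** A) \<le> \<delta>"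
    and "norm (Y - matrix_inv A ** Ys) \<le> \<delta>"
proof -
  have "{A :: real^'r^'r. invertible A} \<noteq> {}"
    by (auto simp: invertible_def intro!: exI[of _ "mat 1"])
  then obtain A where A: "invertible A"
    and lt: "sqrt ((norm (X - Xs ** A))\<^sup>2 + (norm (Y - matrix_inv A ** Ys))\<^sup>2) < \<delta>"
    using assms unfolding dist_Dstar_def
    by (subst (asm) cINF_less_iff) (auto intro!: bdd_belowI2[where m=0])
  show ?thesis
  proof
    show "norm (X - Xs ** A) \<le> \<delta>"
      using lt real_sqrt_sum_squares_ge1[of "norm (X - Xs ** A)" "norm (Y - matrix_inv A ** Ys)"]
      by linarith
    show "norm (Y - matrix_inv A ** Ys) \<le> \<delta>"
      using lt real_sqrt_sum_squares_ge2[of "norm (Y - matrix_inv A ** Ys)" "norm (X - Xs ** A)"]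
      by linarith
  qed (rule A)
qed

lemma near_orbit_margin:
  fixes t \<nu> \<delta> D :: real
  assumes t: "0 < t" and \<nu>: "1/2 < \<nu>" and D: "2 + 48/5 * \<nu> \<le> D"
    and \<delta>: "0 \<le> \<delta>" "\<delta> \<le> 5/2 * (t / D)"
  shows "t / D \<le> t * t / (t + (\<delta> + \<nu> * t)) - \<delta>"
proof -
  define x where "x = t / D"
  have D_pos: "0 < D" using D \<nu> by linarith
  then have t_eq: "t = x * D" and x: "0 < x" using t by (simp_all add: x_def)
  have "D * (2 + 48/5 * \<nu>) \<le> D * D"
    using D D_pos by (simp add: mult_left_mono)
  then have "2 * D + 48/5 * (\<nu> * D) \<le> D * D" by (simp add: algebra_simps)
  moreover have "1/2 * D \<le> \<nu> * D"
    using D_pos \<nu> by (simp add: mult_right_mono)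
  ultimately have margin: "7/2 * D + 35/4 + 7/2 * (\<nu> * D) \<le> D * D"
    using D \<nu> by linarith
  have \<delta>_x: "\<delta> \<le> 5/2 * x" using \<delta> by (simp add: x_def)
  have "(x + \<delta>) * (t + (\<delta> + \<nu> * t)) \<le> (7/2 * x) * (t + (5/2 * x + \<nu> * t))"
    using \<delta> \<delta>_x x t \<nu> by (intro mult_mono) simp_all
  also have "\<dots> = x * x * (7/2 * D + 35/4 + 7/2 * (\<nu> * D))"
    by (simp add: t_eq algebra_simps)
  also have "\<dots> \<le> x * x * (D * D)"
    using margin x by (simp add: mult_left_mono)
  finally have "(x + \<delta>) * (t + (\<delta> + \<nu> * t)) \<le> t * t"
    by (simp add: t_eq algebra_simps)
  moreover have "0 < t + (\<delta> + \<nu> * t)" using t \<delta> \<nu> by (simp add: add_pos_nonneg)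
  ultimately have "x + \<delta> \<le> t * t / (t + (\<delta> + \<nu> * t))"
    by (simp add: le_divide_eq)
  then show ?thesis by (simp add: x_def)
qed

lemma stretch_ge_factors_from_dist:
  fixes U :: "real^'r^'d1" and V :: "real^'r^'d2" and X :: "real^'r^'d1" and Y :: "real^'d2^'r"
  assumes U: "transpose U ** U = mat 1" and V: "transpose V ** V = mat 1"
    and s: "\<And>i. t \<le> s i" and t: "0 < t" and \<nu>: "1/2 < \<nu>" and D: "2 + 48/5 * \<nu> \<le> D"
    and X: "norm (X - U ** diag_mat s) \<le> \<nu> * t"
    and Y: "norm (Y - diag_mat s ** transpose V) \<le> \<nu> * t"
    and dist: "dist_Dstar (U ** diag_mat s) (diag_mat s ** transpose V) X Y \<le> 2 * (t / D)"
  shows "stretch_ge (transpose U ** X) (t / D) \<and> stretch_ge (transpose V ** transpose Y) (t / D)"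
proof -
  have D_pos: "0 < D" using D \<nu> by linarith
  define \<delta> where "\<delta> = dist_Dstar (U ** diag_mat s) (diag_mat s ** transpose V) X Y + t / D / 2"
  have "dist_Dstar (U ** diag_mat s) (diag_mat s ** transpose V) X Y < \<delta>"
    using t D_pos by (simp add: \<delta>_def)
  then obtain B where B: "invertible B" and XB: "norm (X - U ** diag_mat s ** B) \<le> \<delta>"
    and YB: "norm (Y - matrix_inv B ** (diag_mat s ** transpose V)) \<le> \<delta>"
    by (rule dist_Dstar_less_imp)
  have "0 \<le> \<delta>" and "\<delta> \<le> 5/2 * (t / D)"
    using dist dist_Dstar_nonneg[of "U ** diag_mat s" "diag_mat s ** transpose V" X Y] t D_pos
    by (simp_all add: \<delta>_def)
  then have "t / D \<le> t * t / (t + (\<delta> + \<nu> * t)) - \<delta>"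
    by (rule near_orbit_margin[OF t \<nu> D])
  then show ?thesis
    using stretch_ge_factors_near_orbit[OF U V s t B X Y XB YB] stretch_ge_mono by blast
qed

lemma stretch_ge_factors:
  fixes U :: "real^'r^'d1" and V :: "real^'r^'d2" and X :: "real^'r^'d1" and Y :: "real^'d2^'r"
  assumes U: "transpose U ** U = mat 1" and V: "transpose V ** V = mat 1"
    and s: "\<And>i. t \<le> s i" and \<nu>: "0 < \<nu>"
    and X: "norm (X - U ** diag_mat s) \<le> \<nu> * t"
    and Y: "norm (Y - diag_mat s ** transpose V) \<le> \<nu> * t"
    and dist: "dist_Dstar (U ** diag_mat s) (diag_mat s ** transpose V) X Y
      \<le> t / (1 + 2 * (1 + sqrt 2) * \<nu>)"
  shows "stretch_ge (transpose U ** X) (t / (2 + 4 * (1 + sqrt 2) * \<nu>))"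
    and "stretch_ge (transpose V ** transpose Y) (t / (2 + 4 * (1 + sqrt 2) * \<nu>))"
proof -
  define D where "D = 2 + 4 * (1 + sqrt 2) * \<nu>"
  have "7/5 \<le> sqrt 2" by (rule real_le_rsqrt) (simp add: power2_eq_square)
  then have D: "2 + 48/5 * \<nu> \<le> D" using \<nu> by (simp add: D_def)
  then have D_pos: "0 < D" using \<nu> by linarith
  have "stretch_ge (transpose U ** X) (t / D) \<and> stretch_ge (transpose V ** transpose Y) (t / D)"
  proof (cases "0 < t")
    case False
    then show ?thesis using D_pos by (simp add: stretch_ge_nonpos divide_nonpos_pos)
  next
    case t: True
    show ?thesis
    proof (cases "\<nu> \<le> 1/2")
      case True
      have "t / D \<le> t / 2" using D \<nu> t by (intro divide_left_mono) simp_all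
      also have "\<dots> \<le> t - \<nu> * t" using True t mult_right_mono[of \<nu> "1/2" t] by simp
      finally show ?thesis
        using stretch_ge_factors_close[OF U V s t X Y] stretch_ge_mono by blast
    next
      case False
      have "t / (1 + 2 * (1 + sqrt 2) * \<nu>) = 2 * (t / D)"
        using D_pos by (simp add: D_def field_simps)
      then show ?thesis
        using False dist by (intro stretch_ge_factors_from_dist[OF U V s t _ D X Y]) simp_all
    qed
  qed
  then show "stretch_ge (transpose U ** X) (t / (2 + 4 * (1 + sqrt 2) * \<nu>))"
    and "stretch_ge (transpose V ** transpose Y) (t / (2 + 4 * (1 + sqrt 2) * \<nu>))"
    by (simp_all add: D_def)
qed

(* The orbit point with A = S\<^sup>-\<^sup>1 U\<^sup>T X reproduces X exactly on the column space of U. *)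
lemma dist_Dstar_le_blocks:
  fixes U :: "real^'r^'d1" and V :: "real^'r^'d2" and S T :: "real^'r^'r"
    and X :: "real^'r^'d1" and Y :: "real^'d2^'r"
  assumes V: "transpose V ** V = mat 1" and S: "invertible S"
    and X1: "invertible (transpose U ** X)"
  shows "(dist_Dstar (U ** S) (T ** transpose V) X Y)\<^sup>2
    \<le> (norm ((mat 1 - U ** transpose U) ** X))\<^sup>2
      + (norm (matrix_inv (transpose U ** X) ** (transpose U ** X ** (Y ** V) - S ** T)))\<^sup>2
      + (norm (Y ** (mat 1 - V ** transpose V)))\<^sup>2"
proof -
  define X1 where "X1 = transpose U ** X"
  define Xi where "Xi = matrix_inv X1"
  define A where "A = matrix_inv S ** X1"
  let ?D = "(norm (X - U ** S ** A))\<^sup>2 + (norm (Y - matrix_inv A ** (T ** transpose V)))\<^sup>2"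
  note S_inv = matrix_inv_inverse[OF S]
    and X1_inv = matrix_inv_inverse[OF X1, folded X1_def Xi_def]
  have "A ** (Xi ** S) = matrix_inv S ** (X1 ** Xi) ** S"
    and "(Xi ** S) ** A = Xi ** (S ** matrix_inv S) ** X1"
    by (simp_all only: A_def matrix_mul_assoc)
  then have "A ** (Xi ** S) = mat 1" and "(Xi ** S) ** A = mat 1"
    by (simp_all add: S_inv X1_inv)
  then have A: "invertible A" and Ai: "matrix_inv A = Xi ** S"
    by (auto simp: invertible_def intro: matrix_inv_unique)
  have VV: "C ** transpose V ** V = C" for C :: "real^'r^'r"
    by (simp only: matrix_mul_assoc[symmetric] V matrix_mul_rid)
  have "U ** S ** A = U ** (S ** matrix_inv S) ** X1"
    by (simp only: A_def matrix_mul_assoc)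
  then have "X - U ** S ** A = (mat 1 - U ** transpose U) ** X"
    by (simp add: S_inv X1_def matrix_diff_rdistrib matrix_mul_assoc)
  moreover have "(Y - Xi ** S ** (T ** transpose V)) ** V = Xi ** (X1 ** (Y ** V) - S ** T)"
    by (simp add: matrix_diff_rdistrib matrix_diff_ldistrib matrix_mul_assoc VV X1_inv)
  moreover have "(Y - Xi ** S ** (T ** transpose V)) ** (mat 1 - V ** transpose V)
      = Y ** (mat 1 - V ** transpose V)"
    by (simp add: matrix_diff_rdistrib matrix_diff_ldistrib matrix_mul_assoc VV)
  ultimately have blocks: "?D = (norm ((mat 1 - U ** transpose U) ** X))\<^sup>2
      + (norm (Xi ** (X1 ** (Y ** V) - S ** T)))\<^sup>2 + (norm (Y ** (mat 1 - V ** transpose V)))\<^sup>2"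
    using pythagoras_orthonormal_right[OF V, of "Y - Xi ** S ** (T ** transpose V)"]
    by (simp add: Ai)
  have "(dist_Dstar (U ** S) (T ** transpose V) X Y)\<^sup>2 \<le> (sqrt ?D)\<^sup>2"
    by (rule power_mono[OF dist_Dstar_le[OF A] dist_Dstar_nonneg])
  also have "\<dots> = ?D" by simp
  finally show ?thesis by (simp only: blocks Xi_def X1_def)
qed

lemma norm_factor_residual_blocks_le:
  fixes U :: "real^'r^'d1" and V :: "real^'r^'d2" and S T :: "real^'r^'r"
    and X :: "real^'r^'d1" and Y :: "real^'d2^'r"
  assumes U: "transpose U ** U = mat 1" and V: "transpose V ** V = mat 1"
  shows "(norm (transpose U ** X ** (Y ** V) - S ** T))\<^sup>2
      + (norm (transpose U ** X ** (Y ** (mat 1 - V ** transpose V))))\<^sup>2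
      + (norm ((mat 1 - U ** transpose U) ** X ** (Y ** V)))\<^sup>2
    \<le> (norm (X ** Y - U ** S ** T ** transpose V))\<^sup>2"
proof -
  define E where "E = X ** Y - U ** S ** T ** transpose V"
  have UU: "transpose U ** U ** C = C" for C :: "real^'r^'r"
    by (simp add: U)
  have UU': "C ** transpose U ** U = C" for C :: "real^'r^'d1"
    by (simp only: matrix_mul_assoc[symmetric] U matrix_mul_rid)
  have VV: "C ** transpose V ** V = C" for C :: "real^'r^'r"
    by (simp only: matrix_mul_assoc[symmetric] V matrix_mul_rid)
  have "transpose U ** E ** V = transpose U ** X ** (Y ** V) - S ** T"
    and "transpose U ** E ** (mat 1 - V ** transpose V)
      = transpose U ** X ** (Y ** (mat 1 - V ** transpose V))"
    and "(mat 1 - U ** transpose U) ** E ** V = (mat 1 - U ** transpose U) ** X ** (Y ** V)"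
    by (simp_all add: E_def matrix_diff_rdistrib matrix_diff_ldistrib matrix_mul_assoc UU UU' VV U V)
  then show ?thesis
    using pythagoras_orthonormal_left[OF U, of E]
      pythagoras_orthonormal_right[OF V, of "transpose U ** E"]
      pythagoras_orthonormal_right[OF V, of "(mat 1 - U ** transpose U) ** E"]
    by (simp add: E_def)
qed

lemma stretch_mult_dist_Dstar_le:
  fixes U :: "real^'r^'d1" and V :: "real^'r^'d2" and S T :: "real^'r^'r"
    and X :: "real^'r^'d1" and Y :: "real^'d2^'r"
  assumes U: "transpose U ** U = mat 1" and V: "transpose V ** V = mat 1" and S: "invertible S"
    and X1: "stretch_ge (transpose U ** X) a" and Y1: "stretch_ge (transpose V ** transpose Y) a"
  shows "a * dist_Dstar (U ** S) (T ** transpose V) X Y \<le> norm (X ** Y - U ** S ** T ** transpose V)"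
proof (cases "a \<le> 0")
  case True
  then show ?thesis
    by (meson dist_Dstar_nonneg mult_nonpos_nonneg norm_ge_zero order_trans)
next
  case False
  then have a: "0 < a" by simp
  define X1 where "X1 = transpose U ** X"
  define Y1 where "Y1 = Y ** V"
  define Xi where "Xi = matrix_inv X1"
  define Q1 where "Q1 = mat 1 - U ** transpose U"
  define Q2 where "Q2 = mat 1 - V ** transpose V"
  have "X1 *v x = 0 \<Longrightarrow> x = 0" for x
    using X1 a by (auto simp: X1_def stretch_ge_def mult_le_0_iff dest: spec[of _ x])
  then have X1_inv: "invertible X1"
    by (simp add: invertible_left_inverse matrix_left_invertible_ker)
  then have X1_Xi: "X1 ** Xi = mat 1"
    by (simp add: Xi_def matrix_inv_inverse)
  have left: "a * norm Z \<le> norm (X1 ** Z)" for Z :: "real^'c^'r"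
    using X1 a by (intro norm_mult_ge_left) (simp_all add: X1_def)
  have right: "a * norm Z \<le> norm (Z ** Y1)" for Z :: "real^'r^'c"
    using Y1 a by (intro norm_mult_ge_right) (simp_all add: Y1_def matrix_transpose_mul)
  have "a * norm (Xi ** (X1 ** Y1 - S ** T)) \<le> norm (X1 ** Y1 - S ** T)"
    using left[of "Xi ** (X1 ** Y1 - S ** T)"] by (simp add: matrix_mul_assoc X1_Xi)
  moreover note left[of "Y ** Q2"] right[of "Q1 ** X"]
  ultimately have "(a * norm (Q1 ** X))\<^sup>2 + (a * norm (Xi ** (X1 ** Y1 - S ** T)))\<^sup>2
      + (a * norm (Y ** Q2))\<^sup>2 \<le> (norm (X ** Y - U ** S ** T ** transpose V))\<^sup>2"
    using norm_factor_residual_blocks_le[OF U V, of X Y S T, folded X1_def Y1_def Q1_def Q2_def] a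
    by (smt (verit) power_mono mult_nonneg_nonneg norm_ge_zero matrix_mul_assoc)
  moreover have "(dist_Dstar (U ** S) (T ** transpose V) X Y)\<^sup>2
      \<le> (norm (Q1 ** X))\<^sup>2 + (norm (Xi ** (X1 ** Y1 - S ** T)))\<^sup>2 + (norm (Y ** Q2))\<^sup>2"
    using dist_Dstar_le_blocks[OF V S X1_inv[unfolded X1_def]]
    by (simp add: Q1_def Q2_def Xi_def X1_def Y1_def)
  ultimately have "(a * dist_Dstar (U ** S) (T ** transpose V) X Y)\<^sup>2
      \<le> (norm (X ** Y - U ** S ** T ** transpose V))\<^sup>2"
    using mult_left_mono[of _ _ "a\<^sup>2"] by (fastforce simp: power_mult_distrib distrib_left)
  then show ?thesis
    by (simp add: power2_le_iff_abs_le)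
qed

section \<open>The min-max bound on \<open>\<sigma>\<^sub>r\<close>\<close>

lemma exists_unit_vector_in_kernel:
  fixes h :: "'a::euclidean_space \<Rightarrow> 'b::euclidean_space"
  assumes h: "linear h" and S: "subspace S" and hS: "h ` S \<subseteq> T" and dim: "dim T < dim S"
  obtains u where "u \<in> S" and "norm u = 1" and "h u = 0"
proof -
  have "\<not> inj_on h S"
  proof
    assume inj: "inj_on h S"
    have "span S = S" using S by (simp add: span_eq_iff)
    then have "dim (h ` S) = dim S"
      using dim_image_eq[OF h, of S] inj by metis
    moreover have "dim (h ` S) \<le> dim T" by (rule dim_subset[OF hS])
    ultimately show False using dim by linarith
  qed
  then obtain x y where xy: "x \<in> S" "y \<in> S" "x \<noteq> y" "h x = h y"
    unfolding inj_on_def by blast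
  define u where "u = (1 / norm (x - y)) *\<^sub>R (x - y)"
  show ?thesis
  proof
    show "u \<in> S" unfolding u_def using S xy by (intro subspace_scale subspace_diff)
    show "norm u = 1" using xy by (simp add: u_def)
    show "h u = 0" using xy by (simp add: u_def linear_scale[OF h] linear_diff[OF h])
  qed
qed

(* Every r-dimensional subspace contains a unit vector u with V\<^sup>T u supported on coordinate i. *)
lemma sing_val_le_diag_entry:
  fixes M :: "real^'d2^'d1" and U :: "real^'r^'d1" and V :: "real^'r^'d2"
  assumes U: "transpose U ** U = mat 1" and V: "transpose V ** V = mat 1"
    and lam: "\<And>i. 0 \<le> lam i" and svd: "M = U ** diag_mat lam ** transpose V"
  shows "sing_val CARD('r) M \<le> lam i"
  unfolding sing_val_def
proof (rule cSUP_least)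
  have "inj_on ((*v) V) (span UNIV)"
    by (rule inj_onI) (metis V matrix_vector_mul_assoc matrix_vector_mul_lid)
  then have "dim (range ((*v) V)) = CARD('r)"
    using dim_image_eq[of "(*v) V" UNIV] by (simp add: dim_UNIV)
  moreover have "subspace (range ((*v) V))"
    by (rule linear_subspace_image[OF _ subspace_UNIV]) simp
  ultimately show "{S :: (real^'d2) set. subspace S \<and> dim S = CARD('r)} \<noteq> {}" by blast
next
  fix S :: "(real^'d2) set"
  assume "S \<in> {S. subspace S \<and> dim S = CARD('r)}"
  then have S: "subspace S" and dim_S: "dim S = CARD('r)" by auto
  define Z :: "real^'r^'r" where "Z = diag_mat (\<lambda>j. if j = i then 0 else 1)"
  have "(\<lambda>x. (Z ** transpose V) *v x) ` S \<subseteq> {y. axis i 1 \<bullet> y = 0}"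
    by (auto simp: Z_def diag_mat_mult_vec inner_axis' simp flip: matrix_vector_mul_assoc)
  moreover have "dim {y :: real^'r. axis i 1 \<bullet> y = 0} < dim S"
    by (subst dim_hyperplane) (simp_all add: axis_eq_0_iff dim_S)
  ultimately obtain u where u: "u \<in> S" "norm u = 1" and Zu: "(Z ** transpose V) *v u = 0"
    using exists_unit_vector_in_kernel[OF _ S] matrix_vector_mul_linear by blast
  define y where "y = transpose V *v u"
  have "Z *v y = 0" using Zu by (simp only: y_def matrix_vector_mul_assoc)
  then have Zy: "(Z *v y) $ j = 0" for j by simp
  have y: "y $ j = 0" if "j \<noteq> i" for j
    using Zy[of j] that by (simp add: Z_def diag_mat_mult_vec)
  have "norm (M *v u) = norm (diag_mat lam *v y)"
    by (simp add: svd y_def norm_orthonormal_mult_vec[OF U] flip: matrix_vector_mul_assoc)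
  also have "\<dots> \<le> lam i * norm y"
  proof (rule norm_le_scaled_componentwise)
    show "norm ((diag_mat lam *v y) $ j) \<le> lam i * norm (y $ j)" for j
      using lam[of j] y[of j] by (cases "j = i") (simp_all add: diag_mat_mult_vec abs_mult)
  qed (rule lam)
  also have "\<dots> \<le> lam i"
    using norm_transpose_orthonormal_mult_vec_le[OF V, of u] u lam[of i]
    by (simp add: y_def mult_left_le)
  finally have "norm (M *v u) \<le> lam i" .
  then show "(INF x\<in>{x \<in> S. norm x = 1}. norm (M *v x)) \<le> lam i"
    using u by (intro cINF_lower2[where x = u]) (auto intro!: bdd_belowI2[where m = 0])
qed

section \<open>Sharpness of the \<open>\<ell>\<^sub>1\<close> loss\<close>

lemma rank_diff_le:
  fixes A B :: "real^'n^'m"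
  shows "rank (A - B) \<le> rank A + rank B"
proof -
  let ?S = "range ((*v) A)" and ?T = "range ((*v) B)"
  have S: "subspace ?S" and T: "subspace ?T"
    by (rule linear_subspace_image[OF _ subspace_UNIV], simp)+
  have "range ((*v) (A - B)) \<subseteq> {x + y |x y. x \<in> ?S \<and> y \<in> ?T}"
  proof
    fix z assume "z \<in> range ((*v) (A - B))"
    then obtain x where "z = (A - B) *v x" by blast
    then have "z = A *v x + B *v (- x)"
      by (simp add: matrix_vector_mult_diff_rdistrib linear_neg[OF matrix_vector_mul_linear])
    then show "z \<in> {x + y |x y. x \<in> ?S \<and> y \<in> ?T}" by blast
  qed
  then have "rank (A - B) \<le> dim {x + y |x y. x \<in> ?S \<and> y \<in> ?T}"
    unfolding rank_dim_range by (rule dim_subset)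
  also have "\<dots> \<le> dim ?S + dim ?T" using dim_sums_Int[OF S T] by linarith
  finally show ?thesis by (simp add: rank_dim_range)
qed

lemma l1_sub_split: "l1_sub UNIV z = l1_sub I z + l1_sub (- I) z"
  unfolding l1_sub_def
  by (metis Compl_eq_Diff_UNIV finite sum.subset_diff subset_UNIV add.commute)

lemma l1_sub_add_ge:
  assumes "\<And>i. i \<notin> I \<Longrightarrow> c $ i = 0"
  shows "l1_sub (- I) v - l1_sub I v \<le> l1_sub UNIV (v + c) - l1_sub UNIV c"
proof -
  have "l1_sub I (v + c) - l1_sub I c = (\<Sum>i\<in>I. \<bar>v$i + c$i\<bar> - \<bar>c$i\<bar>)"
    by (simp add: l1_sub_def sum_subtractf)
  also have "\<dots> \<ge> (\<Sum>i\<in>I. - \<bar>v$i\<bar>)" by (rule sum_mono) linarith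
  finally have "- l1_sub I v \<le> l1_sub I (v + c) - l1_sub I c"
    by (simp add: l1_sub_def sum_negf)
  moreover have "l1_sub (- I) (v + c) = l1_sub (- I) v" and "l1_sub (- I) c = 0"
    unfolding l1_sub_def by (auto intro!: sum.neutral sum.cong simp: assms)
  ultimately show ?thesis
    using l1_sub_split[of "v + c" I] l1_sub_split[of c I] by linarith
qed

lemma l1_growth_from_sharpness:
  fixes \<A> :: "real^'d2^'d1 \<Rightarrow> real^'m" and M :: "real^'d2^'d1"
    and X :: "real^'r^'d1" and Y :: "real^'d2^'r"
  assumes lin: "linear \<A>" and rank_M: "rank M = CARD('r)"
    and b_out: "\<And>i. i \<notin> I \<Longrightarrow> b $ i = \<A> M $ i"
    and sharpness: "\<And>W. rank W \<le> 2 * CARD('r) \<Longrightarrow>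
         \<kappa> * norm W \<le> l1_sub (- I) (\<A> W) / real CARD('m) - l1_sub I (\<A> W) / real CARD('m)"
  shows "\<kappa> * norm (X ** Y - M)
    \<le> l1_sub UNIV (\<A> (X ** Y) - b) / real CARD('m) - l1_sub UNIV (\<A> M - b) / real CARD('m)"
proof -
  have "rank (X ** Y) \<le> CARD('r)"
    using rank_mul_le_right[of X Y] rank_bound[of Y] by simp
  then have "rank (X ** Y - M) \<le> 2 * CARD('r)"
    using rank_diff_le[of "X ** Y" M] rank_M by linarith
  then have "\<kappa> * norm (X ** Y - M)
      \<le> (l1_sub (- I) (\<A> (X ** Y - M)) - l1_sub I (\<A> (X ** Y - M))) / real CARD('m)"
    using sharpness by (simp add: diff_divide_distrib)
  also have "\<dots>
      \<le> (l1_sub UNIV (\<A> (X ** Y - M) + (\<A> M - b)) - l1_sub UNIV (\<A> M - b)) / real CARD('m)"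
    using b_out by (intro divide_right_mono l1_sub_add_ge) simp_all
  also have "\<A> (X ** Y - M) + (\<A> M - b) = \<A> (X ** Y) - b"
    by (simp add: linear_diff[OF lin])
  finally show ?thesis by (simp add: diff_divide_distrib)
qed

theorem proposition4p7:
  fixes M :: "real^'d2^'d1"
    and U :: "real^'r^'d1" and V :: "real^'r^'d2" and lam :: "'r \<Rightarrow> real"
    and Xs :: "real^'r^'d1" and Ys :: "real^'d2^'r"
    and \<A> :: "real^'d2^'d1 \<Rightarrow> real^'m" and b :: "real^'m"
    and I :: "'m set" and \<kappa>3 \<nu> :: real
    and f :: "real^'r^'d1 \<Rightarrow> real^'d2^'r \<Rightarrow> real"
    and X :: "real^'r^'d1" and Y :: "real^'d2^'r"
  assumes rank_M: "rank M = CARD('r)"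
    and U_orth: "transpose U ** U = mat 1"
    and V_orth: "transpose V ** V = mat 1"
    and lam_pos: "\<And>i. lam i > 0"
    and svd: "M = U ** diag_mat lam ** transpose V"
    and Xs_def: "Xs = U ** diag_mat (\<lambda>i. sqrt (lam i))"
    and Ys_def: "Ys = diag_mat (\<lambda>i. sqrt (lam i)) ** transpose V"
    and lin: "linear \<A>"
    and b_out: "\<And>i. i \<notin> I \<Longrightarrow> b $ i = \<A> M $ i"
    and kappa_pos: "\<kappa>3 > 0"
    and sharpness: "\<And>W. rank W \<le> 2 * CARD('r) \<Longrightarrow>
         \<kappa>3 * norm W \<le> l1_sub (- I) (\<A> W) / real CARD('m) - l1_sub I (\<A> W) / real CARD('m)"
    and f_def: "\<And>X' Y'. f X' Y' = l1_sub UNIV (\<A> (X' ** Y') - b) / real CARD('m)"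
    and nu_pos: "\<nu> > 0"
    and close: "max (norm (X - Xs)) (norm (Y - Ys)) \<le> \<nu> * sqrt (sing_val CARD('r) M)"
    and dist_small: "dist_Dstar Xs Ys X Y \<le> sqrt (sing_val CARD('r) M) / (1 + 2 * (1 + sqrt 2) * \<nu>)"
  shows "f X Y - f Xs Ys \<ge>
    \<kappa>3 * sqrt (sing_val CARD('r) M) / (2 + 4 * (1 + sqrt 2) * \<nu>) * dist_Dstar Xs Ys X Y"
proof -
  define s where "s = (\<lambda>i. sqrt (lam i))"
  define t where "t = sqrt (sing_val CARD('r) M)"
  define c where "c = t / (2 + 4 * (1 + sqrt 2) * \<nu>)"
  have Xs: "Xs = U ** diag_mat s" and Ys: "Ys = diag_mat s ** transpose V"
    by (simp_all add: Xs_def Ys_def s_def)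
  have "diag_mat s ** diag_mat s = diag_mat lam"
    using lam_pos by (simp add: s_def diag_mat_mult less_imp_le)
  then have M: "M = U ** diag_mat s ** diag_mat s ** transpose V"
    by (simp only: svd matrix_mul_assoc[of U "diag_mat s" "diag_mat s", symmetric])
  have s_ge: "t \<le> s i" for i
    using sing_val_le_diag_entry[OF U_orth V_orth _ svd] lam_pos
    by (simp add: t_def s_def less_imp_le)
  have "stretch_ge (transpose U ** X) c" and "stretch_ge (transpose V ** transpose Y) c"
    using stretch_ge_factors[where s = s and X = X and Y = Y, OF U_orth V_orth s_ge nu_pos]
      close dist_small
    by (simp_all add: Xs Ys c_def t_def)
  moreover have "invertible (diag_mat s)"
    using lam_pos by (intro invertible_diag_mat) (simp add: s_def less_imp_neq[symmetric])
  ultimately have "c * dist_Dstar Xs Ys X Y \<le> norm (X ** Y - M)"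
    unfolding Xs Ys M by (intro stretch_mult_dist_Dstar_le[OF U_orth V_orth])
  moreover have "\<kappa>3 * norm (X ** Y - M) \<le> f X Y - f Xs Ys"
    using l1_growth_from_sharpness[OF lin rank_M b_out sharpness]
    by (simp add: f_def Xs Ys M matrix_mul_assoc)
  ultimately have "\<kappa>3 * (c * dist_Dstar Xs Ys X Y) \<le> f X Y - f Xs Ys"
    using kappa_pos by (meson less_imp_le mult_left_mono order_trans)
  then show ?thesis by (simp add: c_def t_def)
qed

end
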